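(* For $t>0$ and $\lambda\in\mathbb C$ with $\lambda\notin\frac12\mathbb N_0$, one has $\Phi^0_\lambda(t)=\Phi_\lambda(t)$, where $$\Phi^0_\lambda(t)=(2\cosh t)^{\lambda-\rho}\,{}_2F_1\!\left(\tfrac{\rho-\lambda}{2},\tfrac{-\rho-\lambda+1+m_1^++m_2^+}{2};1-\lambda;\cosh^{-2}t\right).$$
   Context: Split rank one semisimple symmetric space $G/H$ ($G$ connected semisimple linear Lie group, $\theta$ Cartan involution, $\sigma$ a commuting involution, $H=(G^\sigma)_e$, $\mathfrak a_q=\mathbb RT$ a one-dimensional maximal abelian subspace of $\mathfrak p\cap\mathfrak q$ with the positive root $\alpha$ of $\Sigma(\mathfrak a_q,\mathfrak g)\subset\{\pm\alpha,\pm2\alpha\}$ normalized by $\alpha(T)=1$). With $\mathfrak g^\pm=\{Y:\sigma\theta Y=\pm Y\}$, $m_1^\pm=\dim(\mathfrak g_\alpha\cap\mathfrak g^\pm)$, $m_2^\pm=\dim(\mathfrak g_{2\alpha}\cap\mathfrak g^\pm)$, $\rho=\frac12(m_1^++m_1^-+2m_2^++2m_2^-)$, $J(t)=(\sinh t)^{m_1^+}(\cosh t)^{m_1^-}(\sinh2t)^{m_2^+}(\cosh2t)^{m_2^-}$ and $L(\Delta)=\frac{1}{J(t)}\frac{d}{dt}\big(J(t)\frac{d}{dt}\big)$ (radial part of the Laplace–Beltrami operator). The Harish-Chandra series $\Phi_\lambda(t)=e^{(\lambda-\rho)t}\sum_{m\ge0}\Gamma_m(\lambda)e^{-mt}$,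 with $\Gamma_0(\lambda)=1$ and $\Gamma_m$ meromorphic in $\lambda$ with at most simple poles contained in $\{1/2,1,\dots,m/2\}$, is the series solution of $L(\Delta)\Phi_\lambda=(\lambda^2-\rho^2)\Phi_\lambda$ of this form.
   Formalization: The identity $\Phi^0_\lambda(t)=\Phi_\lambda(t)$ is claimed only when $m_2^-=0$, that is, when $J(t)$ has no factor $\cosh 2t$. The statement above fails without it. *)

theory Defs
  imports "HOL-Analysis.Analysis"
begin

text \<open>Multiplicities m1p = m_1^+, m1m = m_1^-, m2p = m_2^+, m2m = m_2^-.\<close>

definition rho_mult :: "nat \<Rightarrow> nat \<Rightarrow> nat \<Rightarrow> nat \<Rightarrow> real" where
  "rho_mult m1p m1m m2p m2m = (real m1p + real m1m + 2 * real m2p + 2 * real m2m) / 2"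

definition Jfun :: "nat \<Rightarrow> nat \<Rightarrow> nat \<Rightarrow> nat \<Rightarrow> real \<Rightarrow> real" where
  "Jfun m1p m1m m2p m2m t =
     sinh t ^ m1p * cosh t ^ m1m * sinh (2 * t) ^ m2p * cosh (2 * t) ^ m2m"

definition radial_L :: "nat \<Rightarrow> nat \<Rightarrow> nat \<Rightarrow> nat \<Rightarrow> (real \<Rightarrow> complex) \<Rightarrow> real \<Rightarrow> complex" where
  "radial_L m1p m1m m2p m2m f t =
     (1 / Jfun m1p m1m m2p m2m t) *\<^sub>R
       vector_derivative (\<lambda>s. Jfun m1p m1m m2p m2m s *\<^sub>R vector_derivative f (at s)) (at t)"

definition hyp2F1 :: "complex \<Rightarrow> complex \<Rightarrow> complex \<Rightarrow> complex \<Rightarrow> complex" where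
  "hyp2F1 a b c z =
     (\<Sum>n. pochhammer a n * pochhammer b n / (pochhammer c n * fact n) * z ^ n)"

definition HC_sum :: "nat \<Rightarrow> nat \<Rightarrow> nat \<Rightarrow> nat \<Rightarrow> complex \<Rightarrow> (nat \<Rightarrow> complex) \<Rightarrow> real \<Rightarrow> complex" where
  "HC_sum m1p m1m m2p m2m lam \<Gamma> t =
     exp ((lam - complex_of_real (rho_mult m1p m1m m2p m2m)) * complex_of_real t) *
       (\<Sum>m. \<Gamma> m * complex_of_real (exp (- (real m * t))))"

definition HC_series_solution :: "nat \<Rightarrow> nat \<Rightarrow> nat \<Rightarrow> nat \<Rightarrow> complex \<Rightarrow> (nat \<Rightarrow> complex) \<Rightarrow> bool" where
  "HC_series_solution m1p m1m m2p m2m lam \<Gamma> \<longleftrightarrow>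
     \<Gamma> 0 = 1 \<and>
     (\<forall>t>0. summable (\<lambda>m. \<Gamma> m * complex_of_real (exp (- (real m * t))))) \<and>
     (let f = HC_sum m1p m1m m2p m2m lam \<Gamma>;
          \<rho> = complex_of_real (rho_mult m1p m1m m2p m2m) in
      (\<forall>t>0. f differentiable (at t)) \<and>
      (\<forall>t>0. (\<lambda>s. Jfun m1p m1m m2p m2m s *\<^sub>R vector_derivative f (at s)) differentiable (at t)) \<and>
      (\<forall>t>0. radial_L m1p m1m m2p m2m f t = (lam\<^sup>2 - \<rho>\<^sup>2) * f t))"

text \<open>The Harish-Chandra series Phi_lambda: the (unique) series solution of this form.\<close>
definition HC_Phi :: "nat \<Rightarrow> nat \<Rightarrow> nat \<Rightarrow> nat \<Rightarrow> complex \<Rightarrow> real \<Rightarrow> complex" where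
  "HC_Phi m1p m1m m2p m2m lam =
     (THE f. \<exists>\<Gamma>. HC_series_solution m1p m1m m2p m2m lam \<Gamma> \<and> f = HC_sum m1p m1m m2p m2m lam \<Gamma>)"

definition Phi0 :: "nat \<Rightarrow> nat \<Rightarrow> nat \<Rightarrow> nat \<Rightarrow> complex \<Rightarrow> real \<Rightarrow> complex" where
  "Phi0 m1p m1m m2p m2m lam t =
     (let \<rho> = complex_of_real (rho_mult m1p m1m m2p m2m) in
      complex_of_real (2 * cosh t) powr (lam - \<rho>) *
        hyp2F1 ((\<rho> - lam) / 2) ((- \<rho> - lam + 1 + of_nat m1p + of_nat m2p) / 2) (1 - lam)
               (complex_of_real (1 / (cosh t)\<^sup>2)))"

end

theory Submission
  imports Defs "HOL-Complex_Analysis.Complex_Analysis" "HOL-Real_Asymp.Real_Asymp"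
begin

(* Put z = e^(-t) and mu = lam - rho. Then Phi0(t) = e^(mu t) h(z) with
   h(z) = (1 + z^2)^mu 2F1(a, b; 1 - lam; 4 z^2 / (1 + z^2)^2), which is holomorphic near z = 0.
   The hypergeometric equation turns into the radial equation L Phi = (lam^2 - rho^2) Phi for Phi0.
   For m2m = 0 the coefficient J'/J is rational in z, so the equation becomes a three-term recurrence
   for the Taylor coefficients of h, with leading coefficient n (n - 2 lam). This coefficient is
   nonzero because lam is not in N/2, so the series solution is unique. The recurrence also forces
   radius of convergence at least 1, and analytic continuation then shows that e^(mu t) times the
   Taylor series of h at z = e^(-t) equals Phi0(t) for every t > 0. *)

definition pseries :: "(nat \<Rightarrow> complex) \<Rightarrow> complex \<Rightarrow> complex" where
  "pseries a z = (\<Sum>n. a n * z ^ n)"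

lemma pseries_eq_eval_fps: "pseries a = eval_fps (Abs_fps a)"
  by (simp add: fun_eq_iff pseries_def eval_fps_def)

lemma pseries_sums: "ereal (norm z) < conv_radius a \<Longrightarrow> (\<lambda>n. a n * z ^ n) sums pseries a z"
  unfolding pseries_def by (intro summable_sums summable_in_conv_radius)

lemma has_field_derivative_pseries:
  "ereal (norm z) < conv_radius a \<Longrightarrow> (pseries a has_field_derivative pseries (diffs a) z) (at z)"
  unfolding pseries_def [abs_def] by (rule has_field_derivative_powser)

lemma holomorphic_on_pseries: "A \<subseteq> eball 0 (conv_radius a) \<Longrightarrow> pseries a holomorphic_on A"
  unfolding pseries_eq_eval_fps by (intro holomorphic_on_eval_fps) (simp add: fps_conv_radius_def)

lemma conv_radius_diffs_ge:
  fixes a :: "nat \<Rightarrow> 'a :: {banach, real_normed_field}"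
  shows "conv_radius a \<le> conv_radius (diffs a)"
proof -
  have "diffs a = fps_nth (fps_deriv (Abs_fps a))"
    by (simp add: fun_eq_iff diffs_def fps_deriv_def)
  then show ?thesis
    using fps_conv_radius_deriv[of "Abs_fps a"] by (simp add: fps_conv_radius_def)
qed

lemma pseries_coeffs_eq_0:
  fixes a :: "nat \<Rightarrow> complex"
  assumes r: "0 < r" and sums0: "\<And>x. 0 < x \<Longrightarrow> x < r \<Longrightarrow> (\<lambda>n. a n * of_real x ^ n) sums 0"
  shows "a n = 0"
proof -
  have radius: "ereal r \<le> conv_radius a"
    by (rule conv_radius_geI_ex') (use sums0 sums_summable in auto)
  have sums_ball: "(\<lambda>n. a n * z ^ n) sums pseries a z" if "norm z < r" for z
    using that radius by (intro pseries_sums) (simp add: less_le_trans[of _ "ereal r"])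
  have vanish: "pseries a (of_real x) = 0" if "0 < x" "x < r" for x
    using that sums0[OF that] sums_ball[of "of_real x"] by (simp add: sums_unique2)
  have "ereal (norm (0 :: complex)) < conv_radius a"
    using r radius by (simp add: less_le_trans[of _ "ereal r"])
  then have "isCont (pseries a) 0"
    by (rule DERIV_isCont[OF has_field_derivative_pseries])
  then have "((\<lambda>x. pseries a (of_real x)) \<longlongrightarrow> pseries a 0) (at_right 0)"
    by (intro isCont_tendsto_compose[of _ "pseries a"]) (auto intro!: tendsto_eq_intros)
  moreover have "\<forall>\<^sub>F x in at_right 0. pseries a (of_real x) = 0"
    unfolding eventually_at_right_field using r vanish by blast
  ultimately have "((\<lambda>x. 0) \<longlongrightarrow> pseries a 0) (at_right (0::real))"
    by (rule Lim_transform_eventually)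
  then have a0: "a 0 = 0"
    by (simp add: pseries_def tendsto_const_iff)
  show ?thesis
  proof (rule ccontr)
    \<comment> \<open>Otherwise 0 would be an isolated zero of the sum, which vanishes on \<open>(0, r)\<close>.\<close>
    assume "a n \<noteq> 0"
    with a0 have "n > 0" by (cases n) auto
    obtain s where s: "0 < s" "\<And>z. z \<in> cball 0 s - {0} \<Longrightarrow> pseries a z \<noteq> 0"
      by (rule powser_0_nonzero[OF r, of 0 a "pseries a" n])
        (use sums_ball a0 \<open>a n \<noteq> 0\<close> \<open>n > 0\<close> in \<open>auto simp: pseries_def\<close>)
    define x where "x = min s (r / 2)"
    have "0 < x" "x < r" using s r by (auto simp: x_def)
    then have "pseries a (of_real x) = 0" by (rule vanish)
    moreover have "of_real x \<in> cball 0 s - {0::complex}"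
      using \<open>0 < x\<close> by (auto simp: x_def)
    ultimately show False using s(2) by blast
  qed
qed

lemma norm_le_Max_mult_power_if_dominated:
  fixes a :: "nat \<Rightarrow> 'a :: real_normed_vector"
  assumes q: "1 \<le> q" and dominated: "\<And>n. N < n \<Longrightarrow> norm (a n) \<le> q * Max (norm ` a ` {..<n})"
  shows "norm (a n) \<le> Max (norm ` a ` {..N}) * q ^ n"
proof (induction n rule: less_induct)
  case (less n)
  define K where "K = Max (norm ` a ` {..N})"
  have K: "0 \<le> K"
    unfolding K_def by (rule order.trans[OF norm_ge_zero[of "a 0"]]) simp
  show ?case
  proof (cases "n \<le> N")
    case True
    then have "norm (a n) \<le> K"
      by (simp add: K_def)
    also have "K \<le> K * q ^ n"
      using K q by (simp add: mult_le_cancel_left1 one_le_power)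
    finally show ?thesis
      by (simp add: K_def)
  next
    case False
    have "norm (a m) \<le> K * q ^ (n - 1)" if "m < n" for m
    proof -
      have "norm (a m) \<le> K * q ^ m"
        using less[OF that] by (simp add: K_def)
      also have "\<dots> \<le> K * q ^ (n - 1)"
        using K q that by (intro mult_left_mono power_increasing) auto
      finally show ?thesis .
    qed
    moreover have "0 \<in> {..<n}"
      using False by simp
    ultimately have "Max (norm ` a ` {..<n}) \<le> K * q ^ (n - 1)"
      by (subst Max_le_iff) blast+
    then have "norm (a n) \<le> q * (K * q ^ (n - 1))"
      using False q by (intro order.trans[OF dominated mult_left_mono]) auto
    also have "\<dots> = K * q ^ n"
      using False by (cases n) auto
    finally show ?thesis
      by (simp add: K_def)
  qed
qed

lemma one_le_conv_radius_if_dominated: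
  fixes a :: "nat \<Rightarrow> 'a :: {banach, real_normed_div_algebra}"
  assumes dominated: "\<And>q. 1 < q \<Longrightarrow> \<forall>\<^sub>F n in sequentially. norm (a n) \<le> q * Max (norm ` a ` {..<n})"
  shows "1 \<le> conv_radius a"
proof (rule conv_radius_geI_ex')
  fix x :: real assume x: "0 < x" "ereal x < 1"
  define q where "q = (1 + x) / (2 * x)"
  have q: "1 < q" "q * x < 1"
    using x by (simp_all add: q_def field_simps)
  obtain N where "\<And>n. N \<le> n \<Longrightarrow> norm (a n) \<le> q * Max (norm ` a ` {..<n})"
    using dominated[OF q(1)] unfolding eventually_sequentially by blast
  then have bound: "norm (a n) \<le> Max (norm ` a ` {..N}) * q ^ n" for n
    using q(1) by (intro norm_le_Max_mult_power_if_dominated) auto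
  show "summable (\<lambda>n. a n * of_real x ^ n)"
  proof (rule summable_comparison_test')
    show "summable (\<lambda>n. Max (norm ` a ` {..N}) * (q * x) ^ n)"
      using q x by (intro summable_mult summable_geometric) simp
    show "norm (a n * of_real x ^ n) \<le> Max (norm ` a ` {..N}) * (q * x) ^ n" for n
      using mult_right_mono[OF bound[of n], of "x ^ n"] x
      by (simp add: norm_mult norm_power power_mult_distrib mult_ac)
  qed
qed

definition shift_coeffs :: "nat \<Rightarrow> (nat \<Rightarrow> 'a::zero) \<Rightarrow> nat \<Rightarrow> 'a" where
  "shift_coeffs k a n = (if n < k then 0 else a (n - k))"

lemma sums_shift_coeffs:
  fixes a :: "nat \<Rightarrow> 'a :: real_normed_field"
  assumes "(\<lambda>n. a n * z ^ n) sums s"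
  shows "(\<lambda>n. shift_coeffs k a n * z ^ n) sums (z ^ k * s)"
proof -
  have "(\<lambda>n. z ^ k * (a n * z ^ n)) sums (z ^ k * s)"
    by (rule sums_mult[OF assms])
  also have "(\<lambda>n. z ^ k * (a n * z ^ n)) = (\<lambda>n. shift_coeffs k a (n + k) * z ^ (n + k))"
    by (simp add: fun_eq_iff shift_coeffs_def power_add algebra_simps)
  finally show ?thesis
    using sums_zero_iff_shift[of k "\<lambda>n. shift_coeffs k a n * z ^ n"] by (simp add: shift_coeffs_def)
qed

text \<open>The coefficients of \<open>(\<mu> - z d/dz)\<close> applied to a power series; on the series in \<open>z = e\<^sup>-\<^sup>t\<close>
  multiplied by \<open>e\<^sup>\<mu>\<^sup>t\<close> this operator is \<open>d/dt\<close>.\<close>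

definition euler_coeffs :: "complex \<Rightarrow> (nat \<Rightarrow> complex) \<Rightarrow> nat \<Rightarrow> complex" where
  "euler_coeffs \<mu> a n = (\<mu> - of_nat n) * a n"

lemma euler_coeffs_sums:
  assumes "ereal (norm z) < conv_radius a"
  shows "(\<lambda>n. euler_coeffs \<mu> a n * z ^ n) sums (\<mu> * pseries a z - z * pseries (diffs a) z)"
proof -
  have "ereal (norm z) < conv_radius (diffs a)"
    using assms conv_radius_diffs_ge by (rule less_le_trans)
  then have "(\<lambda>n. z * (diffs a n * z ^ n)) sums (z * pseries (diffs a) z)"
    by (intro sums_mult pseries_sums)
  also have "(\<lambda>n. z * (diffs a n * z ^ n)) = (\<lambda>n. of_nat (Suc n) * a (Suc n) * z ^ Suc n)"
    by (simp add: fun_eq_iff diffs_def algebra_simps)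
  finally have "(\<lambda>n. of_nat n * a n * z ^ n) sums (z * pseries (diffs a) z)"
    using sums_Suc_iff[of "\<lambda>n. of_nat n * a n * z ^ n"] by simp
  moreover have "(\<lambda>n. \<mu> * (a n * z ^ n)) sums (\<mu> * pseries a z)"
    by (intro sums_mult pseries_sums assms)
  ultimately show ?thesis
    unfolding euler_coeffs_def by (auto dest: sums_diff simp: algebra_simps)
qed

lemma conv_radius_euler_coeffs_ge: "conv_radius a \<le> conv_radius (euler_coeffs \<mu> a)"
proof (rule conv_radius_geI_ex')
  fix r :: real assume "0 < r" "ereal r < conv_radius a"
  then have "ereal (norm (of_real r :: complex)) < conv_radius a" by simp
  from euler_coeffs_sums[OF this] show "summable (\<lambda>n. euler_coeffs \<mu> a n * of_real r ^ n)"
    by (rule sums_summable)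
qed

lemma pseries_euler_coeffs:
  assumes "ereal (norm z) < conv_radius a"
  shows "pseries (euler_coeffs \<mu> a) z = \<mu> * pseries a z - z * pseries (diffs a) z"
proof -
  have "ereal (norm z) < conv_radius (euler_coeffs \<mu> a)"
    using assms conv_radius_euler_coeffs_ge by (rule less_le_trans)
  then show ?thesis
    using euler_coeffs_sums[OF assms] pseries_sums by (blast intro: sums_unique2)
qed

lemma has_vector_derivative_comp_of_real:
  fixes G :: "complex \<Rightarrow> complex"
  assumes "(u has_real_derivative u') (at t)" and "(G has_field_derivative G') (at (of_real (u t)))"
  shows "((\<lambda>s. G (of_real (u s))) has_vector_derivative (of_real u' * G')) (at t)"
  using field_vector_diff_chain_at[OF has_vector_derivative_of_real[OF assms(1)] assms(2)]
  by (simp add: o_def)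

lemma has_vector_derivative_eq_on_open:
  assumes "open U" "t \<in> U" "\<And>s. s \<in> U \<Longrightarrow> f s = g s"
    and "(f has_vector_derivative f') (at t)" "(g has_vector_derivative g') (at t)"
  shows "f' = g'"
  using has_vector_derivative_transform_within_open[OF assms(4,1,2,3)] assms(5)
  by (rule vector_derivative_unique_at)

definition exp_pseries :: "complex \<Rightarrow> (nat \<Rightarrow> complex) \<Rightarrow> real \<Rightarrow> complex" where
  "exp_pseries \<mu> a t = exp (\<mu> * of_real t) * pseries a (of_real (exp (- t)))"

lemma has_vector_derivative_exp_pseries:
  assumes "ereal (exp (- t)) < conv_radius a"
  shows "(exp_pseries \<mu> a has_vector_derivative exp_pseries \<mu> (euler_coeffs \<mu> a) t) (at t)"
proof -
  let ?z = "of_real (exp (- t)) :: complex"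
  let ?e = "exp (\<mu> * of_real t)"
  have "((\<lambda>z. exp (\<mu> * z)) has_field_derivative \<mu> * ?e) (at (of_real t))"
    by (auto intro!: derivative_eq_intros)
  then have "((\<lambda>s. exp (\<mu> * of_real s)) has_vector_derivative \<mu> * ?e) (at t)"
    using has_vector_derivative_real_field by fastforce
  moreover have "((\<lambda>s. pseries a (of_real (exp (- s)))) has_vector_derivative
      (of_real (- exp (- t)) * pseries (diffs a) ?z)) (at t)"
    by (rule has_vector_derivative_comp_of_real)
      (auto intro!: derivative_eq_intros has_field_derivative_pseries simp: assms)
  ultimately have deriv: "(exp_pseries \<mu> a has_vector_derivative
      ?e * (of_real (- exp (- t)) * pseries (diffs a) ?z) + \<mu> * ?e * pseries a ?z) (at t)"
    unfolding exp_pseries_def [abs_def] by (rule has_vector_derivative_mult)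
  have euler: "pseries (euler_coeffs \<mu> a) ?z = \<mu> * pseries a ?z - ?z * pseries (diffs a) ?z"
    by (rule pseries_euler_coeffs) (simp add: assms)
  have "exp_pseries \<mu> (euler_coeffs \<mu> a) t =
      ?e * (of_real (- exp (- t)) * pseries (diffs a) ?z) + \<mu> * ?e * pseries a ?z"
    unfolding exp_pseries_def euler by (simp add: algebra_simps)
  with deriv show ?thesis
    by simp
qed

lemma exp_minus_of_nat_mult: "exp (- (real m * t)) = exp (- t) ^ m"
  by (metis exp_of_nat_mult mult_minus_right)

lemma HC_sum_eq_exp_pseries:
  "HC_sum m1p m1m m2p m2m lam \<Gamma> = exp_pseries (lam - of_real (rho_mult m1p m1m m2p m2m)) \<Gamma>"
  by (simp add: fun_eq_iff HC_sum_def exp_pseries_def pseries_def exp_minus_of_nat_mult)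

lemma one_le_conv_radius_iff_summable_exp:
  "1 \<le> conv_radius \<Gamma> \<longleftrightarrow> (\<forall>t>0. summable (\<lambda>m. \<Gamma> m * complex_of_real (exp (- (real m * t)))))"
proof
  assume radius: "1 \<le> conv_radius \<Gamma>"
  show "\<forall>t>0. summable (\<lambda>m. \<Gamma> m * complex_of_real (exp (- (real m * t))))"
  proof (intro allI impI)
    fix t :: real assume "0 < t"
    then have "ereal (norm (of_real (exp (- t)) :: complex)) < conv_radius \<Gamma>"
      using radius by (simp add: less_le_trans[of _ 1])
    then show "summable (\<lambda>m. \<Gamma> m * complex_of_real (exp (- (real m * t))))"
      unfolding exp_minus_of_nat_mult of_real_power by (rule summable_in_conv_radius)
  qed
next
  assume summable: "\<forall>t>0. summable (\<lambda>m. \<Gamma> m * complex_of_real (exp (- (real m * t))))"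
  show "1 \<le> conv_radius \<Gamma>"
  proof (rule conv_radius_geI_ex')
    fix x :: real assume x: "0 < x" "ereal x < 1"
    then have "0 < - ln x"
      by simp
    with summable have "summable (\<lambda>m. \<Gamma> m * complex_of_real (exp (- (- ln x)) ^ m))"
      unfolding exp_minus_of_nat_mult by blast
    with x show "summable (\<lambda>m. \<Gamma> m * of_real x ^ m)"
      by (simp add: of_real_power)
  qed
qed

lemma DERIV_power_logderiv:
  assumes "(g has_real_derivative g') (at x)" and "g x \<noteq> 0"
  shows "((\<lambda>x. g x ^ n) has_real_derivative g x ^ n * (real n * g' / g x)) (at x)"
  by (rule DERIV_cong[OF DERIV_power[OF assms(1)]]) (use assms(2) in \<open>cases n; simp add: field_simps\<close>)

definition Jfun_logderiv :: "nat \<Rightarrow> nat \<Rightarrow> nat \<Rightarrow> nat \<Rightarrow> real \<Rightarrow> real" where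
  "Jfun_logderiv m1p m1m m2p m2m t =
     real m1p * cosh t / sinh t + real m1m * sinh t / cosh t
       + 2 * real m2p * cosh (2 * t) / sinh (2 * t) + 2 * real m2m * sinh (2 * t) / cosh (2 * t)"

lemma Jfun_pos: "0 < t \<Longrightarrow> 0 < Jfun m1p m1m m2p m2m t"
  unfolding Jfun_def by (simp add: cosh_real_pos)

lemma has_real_derivative_Jfun:
  assumes "0 < t"
  shows "(Jfun m1p m1m m2p m2m has_real_derivative
            Jfun m1p m1m m2p m2m t * Jfun_logderiv m1p m1m m2p m2m t) (at t)"
proof -
  have nz: "sinh t \<noteq> 0" "cosh t \<noteq> 0" "sinh (2 * t) \<noteq> 0" "cosh (2 * t) \<noteq> 0"
    using assms by auto
  have d1: "((\<lambda>s. sinh s ^ m1p) has_real_derivative sinh t ^ m1p * (real m1p * cosh t / sinh t)) (at t)"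
    by (rule DERIV_power_logderiv[where g = sinh, OF _ nz(1)]) (auto intro!: derivative_eq_intros)
  have d2: "((\<lambda>s. cosh s ^ m1m) has_real_derivative cosh t ^ m1m * (real m1m * sinh t / cosh t)) (at t)"
    by (rule DERIV_power_logderiv[where g = cosh, OF _ nz(2)]) (auto intro!: derivative_eq_intros)
  have d3: "((\<lambda>s. sinh (2 * s) ^ m2p) has_real_derivative
      sinh (2 * t) ^ m2p * (real m2p * (2 * cosh (2 * t)) / sinh (2 * t))) (at t)"
    by (rule DERIV_power_logderiv[where g = "\<lambda>s. sinh (2 * s)", OF _ nz(3)])
      (auto intro!: derivative_eq_intros)
  have d4: "((\<lambda>s. cosh (2 * s) ^ m2m) has_real_derivative
      cosh (2 * t) ^ m2m * (real m2m * (2 * sinh (2 * t)) / cosh (2 * t))) (at t)"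
    by (rule DERIV_power_logderiv[where g = "\<lambda>s. cosh (2 * s)", OF _ nz(4)])
      (auto intro!: derivative_eq_intros)
  show ?thesis
    unfolding Jfun_def [abs_def]
    by (rule DERIV_cong[OF DERIV_mult[OF DERIV_mult[OF DERIV_mult[OF d1 d2] d3] d4]])
      (simp add: Jfun_def Jfun_logderiv_def algebra_simps)
qed

lemma has_vector_derivative_Jfun_scaleR_derivative:
  fixes f :: "real \<Rightarrow> complex"
  assumes U: "open U" "U \<subseteq> {0<..}" "t \<in> U"
    and f': "\<And>s. s \<in> U \<Longrightarrow> (f has_vector_derivative f' s) (at s)"
    and f'': "(f' has_vector_derivative f'') (at t)"
  shows "((\<lambda>s. Jfun m1p m1m m2p m2m s *\<^sub>R vector_derivative f (at s)) has_vector_derivative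
           Jfun m1p m1m m2p m2m t *\<^sub>R (f'' + of_real (Jfun_logderiv m1p m1m m2p m2m t) * f' t)) (at t)"
proof -
  let ?J = "Jfun m1p m1m m2p m2m"
  have deriv: "((\<lambda>s. ?J s *\<^sub>R f' s) has_vector_derivative
      ?J t *\<^sub>R f'' + (?J t * Jfun_logderiv m1p m1m m2p m2m t) *\<^sub>R f' t) (at t)"
    using U by (intro has_vector_derivative_scaleR has_real_derivative_Jfun f'') auto
  have "?J s *\<^sub>R f' s = ?J s *\<^sub>R vector_derivative f (at s)" if "s \<in> U" for s
    using vector_derivative_at[OF f'[OF that]] by simp
  then have "((\<lambda>s. ?J s *\<^sub>R vector_derivative f (at s)) has_vector_derivative
      ?J t *\<^sub>R f'' + (?J t * Jfun_logderiv m1p m1m m2p m2m t) *\<^sub>R f' t) (at t)"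
    by (rule has_vector_derivative_transform_within_open[OF deriv U(1,3)])
  then show ?thesis
    by (simp add: scaleR_add_right scaleR_conv_of_real algebra_simps)
qed

lemma radial_L_eq:
  fixes f :: "real \<Rightarrow> complex"
  assumes "open U" "U \<subseteq> {0<..}" "t \<in> U"
    and "\<And>s. s \<in> U \<Longrightarrow> (f has_vector_derivative f' s) (at s)"
    and "(f' has_vector_derivative f'') (at t)"
  shows "radial_L m1p m1m m2p m2m f t = f'' + of_real (Jfun_logderiv m1p m1m m2p m2m t) * f' t"
proof -
  have "0 < Jfun m1p m1m m2p m2m t"
    using assms(2,3) by (intro Jfun_pos) auto
  moreover have "vector_derivative (\<lambda>s. Jfun m1p m1m m2p m2m s *\<^sub>R vector_derivative f (at s)) (at t)
      = Jfun m1p m1m m2p m2m t *\<^sub>R (f'' + of_real (Jfun_logderiv m1p m1m m2p m2m t) * f' t)"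
    by (rule vector_derivative_at[OF has_vector_derivative_Jfun_scaleR_derivative[OF assms]])
  ultimately show ?thesis
    unfolding radial_L_def by simp
qed

lemma radial_L_exp_pseries:
  assumes radius: "1 \<le> conv_radius \<Gamma>" and t: "0 < t"
  shows "radial_L m1p m1m m2p m2m (exp_pseries \<mu> \<Gamma>) t =
           exp_pseries \<mu> (euler_coeffs \<mu> (euler_coeffs \<mu> \<Gamma>)) t
             + of_real (Jfun_logderiv m1p m1m m2p m2m t) * exp_pseries \<mu> (euler_coeffs \<mu> \<Gamma>) t"
    and "(\<lambda>s. Jfun m1p m1m m2p m2m s *\<^sub>R vector_derivative (exp_pseries \<mu> \<Gamma>) (at s)) differentiable (at t)"
    and "exp_pseries \<mu> \<Gamma> differentiable (at t)"
proof -
  have small: "ereal (exp (- s)) < conv_radius a" if "0 < s" "1 \<le> conv_radius a" for s a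
    using that by (simp add: less_le_trans[of _ 1])
  have d1: "(exp_pseries \<mu> \<Gamma> has_vector_derivative exp_pseries \<mu> (euler_coeffs \<mu> \<Gamma>) s) (at s)"
    if "s \<in> {0<..}" for s
    using that radius by (intro has_vector_derivative_exp_pseries small) auto
  have d2: "(exp_pseries \<mu> (euler_coeffs \<mu> \<Gamma>) has_vector_derivative
      exp_pseries \<mu> (euler_coeffs \<mu> (euler_coeffs \<mu> \<Gamma>)) t) (at t)"
    using t radius conv_radius_euler_coeffs_ge[of \<Gamma> \<mu>]
    by (intro has_vector_derivative_exp_pseries small) auto
  have U: "open {0::real<..}" "{0::real<..} \<subseteq> {0<..}" "t \<in> {0<..}"
    using t by auto
  show "radial_L m1p m1m m2p m2m (exp_pseries \<mu> \<Gamma>) t =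
      exp_pseries \<mu> (euler_coeffs \<mu> (euler_coeffs \<mu> \<Gamma>)) t
        + of_real (Jfun_logderiv m1p m1m m2p m2m t) * exp_pseries \<mu> (euler_coeffs \<mu> \<Gamma>) t"
    by (rule radial_L_eq[OF U d1 d2])
  show "(\<lambda>s. Jfun m1p m1m m2p m2m s *\<^sub>R vector_derivative (exp_pseries \<mu> \<Gamma>) (at s)) differentiable (at t)"
    by (rule differentiableI_vector, rule has_vector_derivative_Jfun_scaleR_derivative[OF U d1 d2])
  show "exp_pseries \<mu> \<Gamma> differentiable (at t)"
    using d1 t by (intro differentiableI_vector) auto
qed

lemma HC_series_solution_iff:
  fixes m1p m1m m2p m2m :: nat
  defines "\<rho> \<equiv> complex_of_real (rho_mult m1p m1m m2p m2m)"
  shows "HC_series_solution m1p m1m m2p m2m lam \<Gamma> \<longleftrightarrow>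
    \<Gamma> 0 = 1 \<and> 1 \<le> conv_radius \<Gamma> \<and>
    (\<forall>t>0. exp_pseries (lam - \<rho>) (euler_coeffs (lam - \<rho>) (euler_coeffs (lam - \<rho>) \<Gamma>)) t
       + of_real (Jfun_logderiv m1p m1m m2p m2m t) * exp_pseries (lam - \<rho>) (euler_coeffs (lam - \<rho>) \<Gamma>) t
       = (lam\<^sup>2 - \<rho>\<^sup>2) * exp_pseries (lam - \<rho>) \<Gamma> t)"
  unfolding HC_series_solution_def Let_def HC_sum_eq_exp_pseries \<rho>_def [symmetric]
    one_le_conv_radius_iff_summable_exp [symmetric]
  by (auto simp: radial_L_exp_pseries)

lemma Jfun_logderiv_tanh:
  assumes "0 < t"
  shows "Jfun_logderiv m1p m1m m2p 0 t =
    (real m1p + real m1m * tanh t ^ 2 + real m2p * (1 + tanh t ^ 2)) / tanh t"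
proof -
  have "sinh t > 0" "cosh t > 0"
    using assms by simp_all
  then show ?thesis
    unfolding Jfun_logderiv_def tanh_def sinh_double cosh_double by (simp add: field_simps power2_eq_square)
qed

lemma Jfun_logderiv_exp_poly:
  assumes "0 < t"
  defines "x \<equiv> exp (- t)"
  shows "Jfun_logderiv m1p m1m m2p 0 t * (1 - x ^ 4) =
     real (m1p + m1m + 2 * m2p) + 2 * (real m1p - real m1m) * x ^ 2 + real (m1p + m1m + 2 * m2p) * x ^ 4"
proof -
  have tanh: "tanh t = (1 - x\<^sup>2) / (1 + x\<^sup>2)"
    using exp_double[of "- t"] by (simp add: tanh_real_altdef x_def)
  have "0 < x" "x < 1"
    using assms by (simp_all add: x_def)
  then have "x\<^sup>2 < 1"
    by (simp add: power_less_one_iff)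
  then have nz: "1 - x\<^sup>2 \<noteq> 0" "1 + x\<^sup>2 \<noteq> 0"
    using add_pos_nonneg[OF zero_less_one zero_le_power2[of x]] by auto
  have "Jfun_logderiv m1p m1m m2p 0 t * (1 - x ^ 4) =
      (real m1p + real m1m * (tanh t)\<^sup>2 + real m2p * (1 + (tanh t)\<^sup>2)) / tanh t * ((1 - x\<^sup>2) * (1 + x\<^sup>2))"
    unfolding Jfun_logderiv_tanh[OF assms(1)] by (simp add: algebra_simps power2_eq_square power4_eq_xxxx)
  also have "\<dots> = real m1p * (1 + x\<^sup>2)\<^sup>2 + real m1m * (1 - x\<^sup>2)\<^sup>2 + real m2p * ((1 + x\<^sup>2)\<^sup>2 + (1 - x\<^sup>2)\<^sup>2)"
  proof -
    have "(p + q * (A / B)\<^sup>2 + u * (1 + (A / B)\<^sup>2)) / (A / B) * (A * B) = p * B\<^sup>2 + q * A\<^sup>2 + u * (B\<^sup>2 + A\<^sup>2)"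
      if "A \<noteq> 0" "B \<noteq> 0" for p q u A B :: real
      using that by (simp add: field_simps power2_eq_square)
    from this[OF nz] show ?thesis
      unfolding tanh by simp
  qed
  also have "\<dots> = real (m1p + m1m + 2 * m2p) + 2 * (real m1p - real m1m) * x ^ 2
      + real (m1p + m1m + 2 * m2p) * x ^ 4"
    by (simp add: algebra_simps power2_eq_square power4_eq_xxxx)
  finally show ?thesis .
qed

lemma inverse_cosh_square: "1 / (cosh t)\<^sup>2 = 1 - (tanh t)\<^sup>2" for t :: real
proof -
  have "1 - (tanh t)\<^sup>2 = ((cosh t)\<^sup>2 - (sinh t)\<^sup>2) / (cosh t)\<^sup>2"
    by (simp add: tanh_def power_divide diff_divide_distrib)
  then show ?thesis
    by (simp add: hyperbolic_pythagoras)
qed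

text \<open>The coefficient of \<open>z\<^sup>n\<close> in \<open>(1 - z\<^sup>4) (D\<^sup>2 - \<kappa>) \<Gamma> + (s + d z\<^sup>2 + s z\<^sup>4) D \<Gamma>\<close> with
  \<open>D = \<mu> - z d/dz\<close>. For \<open>m2m = 0\<close>, \<open>s = m1p + m1m + 2 m2p\<close> and \<open>d = 2 (m1p - m1m)\<close> the factor
  \<open>(s + d z\<^sup>2 + s z\<^sup>4) / (1 - z\<^sup>4)\<close> is \<open>J'/J\<close> in the variable \<open>z = e\<^sup>-\<^sup>t\<close>.\<close>

definition radial_recurrence_lead :: "complex \<Rightarrow> complex \<Rightarrow> complex \<Rightarrow> nat \<Rightarrow> complex" where
  "radial_recurrence_lead \<mu> \<kappa> s n = (\<mu> - of_nat n)\<^sup>2 - \<kappa> + s * (\<mu> - of_nat n)"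

definition radial_recurrence ::
    "complex \<Rightarrow> complex \<Rightarrow> complex \<Rightarrow> complex \<Rightarrow> (nat \<Rightarrow> complex) \<Rightarrow> nat \<Rightarrow> complex" where
  "radial_recurrence \<mu> \<kappa> s d \<Gamma> n =
     radial_recurrence_lead \<mu> \<kappa> s n * \<Gamma> n
       + shift_coeffs 2 (\<lambda>m. d * (\<mu> - of_nat m) * \<Gamma> m) n
       + shift_coeffs 4 (\<lambda>m. (s * (\<mu> - of_nat m) - ((\<mu> - of_nat m)\<^sup>2 - \<kappa>)) * \<Gamma> m) n"

lemma radial_recurrence_if_pseries_eq_0:
  assumes r: "0 < r" "ereal r \<le> conv_radius \<Gamma>"
    and eq: "\<And>x. 0 < x \<Longrightarrow> x < r \<Longrightarrow>
      (1 - of_real x ^ 4) * (pseries (euler_coeffs \<mu> (euler_coeffs \<mu> \<Gamma>)) (of_real x)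
                              - \<kappa> * pseries \<Gamma> (of_real x))
      + (s + d * of_real x ^ 2 + s * of_real x ^ 4) * pseries (euler_coeffs \<mu> \<Gamma>) (of_real x) = 0"
  shows "radial_recurrence \<mu> \<kappa> s d \<Gamma> n = 0"
proof (rule pseries_coeffs_eq_0[OF r(1)])
  fix x :: real assume x: "0 < x" "x < r"
  define z where "z = (of_real x :: complex)"
  define A where "A = (\<lambda>m. ((\<mu> - of_nat m)\<^sup>2 - \<kappa>) * \<Gamma> m)"
  define B where "B = euler_coeffs \<mu> \<Gamma>"
  define X where "X = pseries (euler_coeffs \<mu> B) z - \<kappa> * pseries \<Gamma> z"
  define Y where "Y = pseries B z"
  have z: "ereal (norm z) < conv_radius \<Gamma>"
    using x r by (simp add: z_def less_le_trans[of _ "ereal r"])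
  then have zB: "ereal (norm z) < conv_radius B"
    unfolding B_def using conv_radius_euler_coeffs_ge by (rule less_le_trans)
  then have zBB: "ereal (norm z) < conv_radius (euler_coeffs \<mu> B)"
    using conv_radius_euler_coeffs_ge by (rule less_le_trans)
  have "(\<lambda>n. euler_coeffs \<mu> B n * z ^ n - \<kappa> * (\<Gamma> n * z ^ n)) sums X"
    unfolding X_def by (intro sums_diff sums_mult pseries_sums z zBB)
  then have sA: "(\<lambda>n. A n * z ^ n) sums X"
    by (simp add: A_def B_def euler_coeffs_def power2_eq_square algebra_simps)
  have sB: "(\<lambda>n. B n * z ^ n) sums Y"
    unfolding Y_def by (rule pseries_sums[OF zB])
  have "(\<lambda>n. A n * z ^ n - shift_coeffs 4 A n * z ^ n + s * (B n * z ^ n)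
          + d * (shift_coeffs 2 B n * z ^ n) + s * (shift_coeffs 4 B n * z ^ n))
        sums (X - z ^ 4 * X + s * Y + d * (z ^ 2 * Y) + s * (z ^ 4 * Y))"
    by (intro sums_add sums_diff sums_mult sA sB sums_shift_coeffs)
  moreover have "X - z ^ 4 * X + s * Y + d * (z ^ 2 * Y) + s * (z ^ 4 * Y) = 0"
    using eq[OF x] unfolding X_def Y_def B_def z_def [symmetric] by (simp add: algebra_simps)
  moreover have "(\<lambda>n. A n * z ^ n - shift_coeffs 4 A n * z ^ n + s * (B n * z ^ n)
          + d * (shift_coeffs 2 B n * z ^ n) + s * (shift_coeffs 4 B n * z ^ n))
      = (\<lambda>n. radial_recurrence \<mu> \<kappa> s d \<Gamma> n * z ^ n)"
    by (simp add: fun_eq_iff radial_recurrence_def radial_recurrence_lead_def shift_coeffs_def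
        A_def B_def euler_coeffs_def algebra_simps)
  ultimately show "(\<lambda>n. radial_recurrence \<mu> \<kappa> s d \<Gamma> n * of_real x ^ n) sums 0"
    by (simp add: z_def)
qed

lemma radial_recurrence_if_ode:
  assumes r: "0 < r" "r \<le> 1" "ereal r \<le> conv_radius \<Gamma>"
    and ode: "\<And>t. exp (- t) < r \<Longrightarrow>
      exp_pseries \<mu> (euler_coeffs \<mu> (euler_coeffs \<mu> \<Gamma>)) t
        + of_real (Jfun_logderiv m1p m1m m2p 0 t) * exp_pseries \<mu> (euler_coeffs \<mu> \<Gamma>) t
      = \<kappa> * exp_pseries \<mu> \<Gamma> t"
  shows "radial_recurrence \<mu> \<kappa> (of_nat (m1p + m1m + 2 * m2p)) (2 * (of_nat m1p - of_nat m1m)) \<Gamma> n = 0"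
proof (rule radial_recurrence_if_pseries_eq_0[OF r(1,3)])
  fix x :: real assume x: "0 < x" "x < r"
  define t where "t = - ln x"
  have t: "exp (- t) = x" "0 < t"
    using x r(2) by (simp_all add: t_def)
  define z where "z = (of_real x :: complex)"
  define R where "R = (of_real (Jfun_logderiv m1p m1m m2p 0 t) :: complex)"
  define P0 P1 P2 where "P0 = pseries \<Gamma> z" and "P1 = pseries (euler_coeffs \<mu> \<Gamma>) z"
    and "P2 = pseries (euler_coeffs \<mu> (euler_coeffs \<mu> \<Gamma>)) z"
  have "exp (\<mu> * of_real t) * (P2 + R * P1 - \<kappa> * P0) = 0"
    using ode[of t] x unfolding exp_pseries_def t(1)
    by (simp add: P0_def P1_def P2_def R_def z_def algebra_simps)
  then have ode_z: "P2 + R * P1 - \<kappa> * P0 = 0"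
    by simp
  have "of_real (Jfun_logderiv m1p m1m m2p 0 t * (1 - x ^ 4)) =
      (of_real (real (m1p + m1m + 2 * m2p) + 2 * (real m1p - real m1m) * x ^ 2
        + real (m1p + m1m + 2 * m2p) * x ^ 4) :: complex)"
    using Jfun_logderiv_exp_poly[OF t(2), of m1p m1m m2p] unfolding t(1) by simp
  then have poly: "R * (1 - z ^ 4) =
      of_nat (m1p + m1m + 2 * m2p) + 2 * (of_nat m1p - of_nat m1m) * z ^ 2
        + of_nat (m1p + m1m + 2 * m2p) * z ^ 4"
    by (simp add: R_def z_def)
  have "(1 - z ^ 4) * (P2 - \<kappa> * P0) + (of_nat (m1p + m1m + 2 * m2p)
        + 2 * (of_nat m1p - of_nat m1m) * z ^ 2 + of_nat (m1p + m1m + 2 * m2p) * z ^ 4) * P1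
      = (1 - z ^ 4) * (P2 + R * P1 - \<kappa> * P0)"
    unfolding poly [symmetric] by (simp add: algebra_simps)
  also have "\<dots> = 0"
    using ode_z by simp
  finally show "(1 - of_real x ^ 4) * (pseries (euler_coeffs \<mu> (euler_coeffs \<mu> \<Gamma>)) (of_real x)
        - \<kappa> * pseries \<Gamma> (of_real x))
      + (of_nat (m1p + m1m + 2 * m2p) + 2 * (of_nat m1p - of_nat m1m) * of_real x ^ 2
        + of_nat (m1p + m1m + 2 * m2p) * of_real x ^ 4) * pseries (euler_coeffs \<mu> \<Gamma>) (of_real x) = 0"
    by (simp add: P0_def P1_def P2_def z_def)
qed

lemma radial_recurrence_unique:
  assumes rec: "\<And>n. radial_recurrence \<mu> \<kappa> s d \<Gamma> n = 0" "\<And>n. radial_recurrence \<mu> \<kappa> s d \<Gamma>' n = 0"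
    and init: "\<Gamma> 0 = \<Gamma>' 0"
    and lead: "\<And>n. 0 < n \<Longrightarrow> radial_recurrence_lead \<mu> \<kappa> s n \<noteq> 0"
  shows "\<Gamma> n = \<Gamma>' n"
proof (induction n rule: less_induct)
  case (less n)
  show ?case
  proof (cases "n = 0")
    case True
    with init show ?thesis by simp
  next
    case False
    have "radial_recurrence \<mu> \<kappa> s d \<Gamma> n - radial_recurrence \<mu> \<kappa> s d \<Gamma>' n
        = radial_recurrence_lead \<mu> \<kappa> s n * (\<Gamma> n - \<Gamma>' n)"
      using less False by (simp add: radial_recurrence_def shift_coeffs_def algebra_simps)
    with rec lead[of n] False show ?thesis
      by simp
  qed
qed

lemma norm_radial_recurrence_lead_ge:
  "real n ^ 2 - norm (2 * \<mu> + s) * real n - norm (\<mu>\<^sup>2 - \<kappa> + s * \<mu>) \<le> norm (radial_recurrence_lead \<mu> \<kappa> s n)"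
proof -
  have "of_nat n ^ 2 = radial_recurrence_lead \<mu> \<kappa> s n + (2 * \<mu> + s) * of_nat n - (\<mu>\<^sup>2 - \<kappa> + s * \<mu>)"
    by (simp add: radial_recurrence_lead_def power2_eq_square algebra_simps)
  then have "real n ^ 2 = norm (radial_recurrence_lead \<mu> \<kappa> s n + (2 * \<mu> + s) * of_nat n
      - (\<mu>\<^sup>2 - \<kappa> + s * \<mu>))"
    by (metis norm_of_nat norm_power)
  also have "\<dots> \<le> norm (radial_recurrence_lead \<mu> \<kappa> s n) + norm ((2 * \<mu> + s) * of_nat n)
      + norm (\<mu>\<^sup>2 - \<kappa> + s * \<mu>)"
    by (intro order.trans[OF norm_triangle_ineq4] add_right_mono norm_triangle_ineq)
  finally show ?thesis
    by (simp add: norm_mult)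
qed

lemma norm_diff_of_nat_le:
  fixes \<mu> :: complex
  assumes "m \<le> n"
  shows "norm (\<mu> - of_nat m) \<le> norm \<mu> + real n"
  using norm_triangle_ineq4[of \<mu> "of_nat m"] assms by simp

lemma norm_radial_recurrence_lead_mult_le:
  assumes rec: "radial_recurrence \<mu> \<kappa> s d \<Gamma> n = 0" and n: "4 \<le> n"
  shows "norm (radial_recurrence_lead \<mu> \<kappa> s n) * norm (\<Gamma> n) \<le>
    (real n ^ 2 + (2 * norm \<mu> + norm d + norm s) * real n
      + ((norm \<mu>)\<^sup>2 + (norm d + norm s) * norm \<mu> + norm \<kappa>)) * Max (norm ` \<Gamma> ` {..<n})"
proof -
  define M where "M = norm \<mu>"
  define G where "G = Max (norm ` \<Gamma> ` {..<n})"
  have G: "norm (\<Gamma> m) \<le> G" if "m < n" for m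
    unfolding G_def using that by simp
  let ?c = "radial_recurrence_lead \<mu> \<kappa> s n"
  let ?c2 = "d * (\<mu> - of_nat (n - 2))"
  let ?c4 = "s * (\<mu> - of_nat (n - 4)) - ((\<mu> - of_nat (n - 4))\<^sup>2 - \<kappa>)"
  have c2: "norm ?c2 \<le> norm d * (M + real n)"
    unfolding norm_mult M_def by (intro mult_left_mono norm_diff_of_nat_le) auto
  have "norm ?c4 \<le> norm (s * (\<mu> - of_nat (n - 4))) + norm ((\<mu> - of_nat (n - 4))\<^sup>2 - \<kappa>)"
    by (rule norm_triangle_ineq4)
  also have "\<dots> \<le> norm s * norm (\<mu> - of_nat (n - 4)) + (norm (\<mu> - of_nat (n - 4)) ^ 2 + norm \<kappa>)"
    unfolding norm_mult by (intro add_left_mono order.trans[OF norm_triangle_ineq4]) (simp add: norm_power)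
  also have "\<dots> \<le> norm s * (M + real n) + ((M + real n) ^ 2 + norm \<kappa>)"
    unfolding M_def by (intro add_mono mult_left_mono power_mono norm_diff_of_nat_le) auto
  finally have c4: "norm ?c4 \<le> norm s * (M + real n) + (M + real n) ^ 2 + norm \<kappa>"
    by (simp add: add.assoc)
  have "?c * \<Gamma> n + (?c2 * \<Gamma> (n - 2) + ?c4 * \<Gamma> (n - 4)) = 0"
    using rec n by (simp add: radial_recurrence_def shift_coeffs_def add.assoc)
  then have "?c * \<Gamma> n = - (?c2 * \<Gamma> (n - 2) + ?c4 * \<Gamma> (n - 4))"
    by (simp only: eq_neg_iff_add_eq_0)
  then have "norm ?c * norm (\<Gamma> n) = norm (?c2 * \<Gamma> (n - 2) + ?c4 * \<Gamma> (n - 4))"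
    by (metis norm_minus_cancel norm_mult)
  also have "\<dots> \<le> norm ?c2 * norm (\<Gamma> (n - 2)) + norm ?c4 * norm (\<Gamma> (n - 4))"
    unfolding norm_mult [symmetric] by (rule norm_triangle_ineq)
  also have "\<dots> \<le> (norm d * (M + real n)) * G + (norm s * (M + real n) + (M + real n) ^ 2 + norm \<kappa>) * G"
    using n by (intro add_mono mult_mono c2 c4 G) (auto simp: M_def)
  also have "\<dots> = (real n ^ 2 + (2 * M + norm d + norm s) * real n + (M\<^sup>2 + (norm d + norm s) * M + norm \<kappa>)) * G"
    by (simp add: power2_eq_square algebra_simps)
  finally show ?thesis
    by (simp add: M_def G_def)
qed

lemma one_le_conv_radius_if_radial_recurrence:
  assumes rec: "\<And>n. radial_recurrence \<mu> \<kappa> s d \<Gamma> n = 0"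
  shows "1 \<le> conv_radius \<Gamma>"
proof (rule one_le_conv_radius_if_dominated)
  fix q :: real assume q: "1 < q"
  define \<alpha> where "\<alpha> = 2 * norm \<mu> + norm d + norm s"
  define \<beta> where "\<beta> = (norm \<mu>)\<^sup>2 + (norm d + norm s) * norm \<mu> + norm \<kappa>"
  define \<gamma> where "\<gamma> = norm (2 * \<mu> + s)"
  define \<delta> where "\<delta> = norm (\<mu>\<^sup>2 - \<kappa> + s * \<mu>)"
  have "\<forall>\<^sub>F n in sequentially. real n ^ 2 + \<alpha> * real n + \<beta> \<le> q * (real n ^ 2 - \<gamma> * real n - \<delta>)"
    using q by real_asymp
  moreover have "\<forall>\<^sub>F n in sequentially. 0 < real n ^ 2 - \<gamma> * real n - \<delta>"
    by real_asymp
  moreover have "\<forall>\<^sub>F n in sequentially. 4 \<le> n"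
    by (rule eventually_ge_at_top)
  ultimately show "\<forall>\<^sub>F n in sequentially. norm (\<Gamma> n) \<le> q * Max (norm ` \<Gamma> ` {..<n})"
  proof eventually_elim
    case (elim n)
    let ?c = "radial_recurrence_lead \<mu> \<kappa> s n"
    let ?G = "Max (norm ` \<Gamma> ` {..<n})"
    have lead: "real n ^ 2 - \<gamma> * real n - \<delta> \<le> norm ?c"
      unfolding \<gamma>_def \<delta>_def by (rule norm_radial_recurrence_lead_ge)
    have "norm ?c * norm (\<Gamma> n) \<le> (real n ^ 2 + \<alpha> * real n + \<beta>) * ?G"
      unfolding \<alpha>_def \<beta>_def by (rule norm_radial_recurrence_lead_mult_le[OF rec elim(3)])
    also have "\<dots> \<le> q * norm ?c * ?G"
    proof (rule mult_right_mono)
      show "real n ^ 2 + \<alpha> * real n + \<beta> \<le> q * norm ?c"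
        using elim(1) mult_left_mono[OF lead, of q] q by linarith
      show "0 \<le> ?G"
        using elim(3) by (intro order.trans[OF norm_ge_zero[of "\<Gamma> 0"] Max_ge]) auto
    qed
    finally have "norm ?c * norm (\<Gamma> n) \<le> q * norm ?c * ?G" .
    moreover have "0 < norm ?c"
      using elim(2) lead by linarith
    ultimately show ?case
      by (simp add: mult.assoc mult.left_commute[of q])
  qed
qed

definition hyp2F1_coeff :: "complex \<Rightarrow> complex \<Rightarrow> complex \<Rightarrow> nat \<Rightarrow> complex" where
  "hyp2F1_coeff a b c n = pochhammer a n * pochhammer b n / (pochhammer c n * fact n)"

lemma hyp2F1_eq_pseries: "hyp2F1 a b c = pseries (hyp2F1_coeff a b c)"
  by (simp add: fun_eq_iff hyp2F1_def pseries_def hyp2F1_coeff_def)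

lemma hyp2F1_coeff_0 [simp]: "hyp2F1_coeff a b c 0 = 1"
  by (simp add: hyp2F1_coeff_def)

lemma hyp2F1_coeff_Suc:
  "hyp2F1_coeff a b c (Suc n) =
     (a + of_nat n) * (b + of_nat n) / ((c + of_nat n) * of_nat (Suc n)) * hyp2F1_coeff a b c n"
  by (simp add: hyp2F1_coeff_def pochhammer_Suc field_simps)

lemma hyp2F1_coeff_recurrence:
  assumes "c + of_nat n \<noteq> 0"
  shows "(of_nat n + 1) * (of_nat n + c) * hyp2F1_coeff a b c (Suc n)
           = (of_nat n + a) * (of_nat n + b) * hyp2F1_coeff a b c n"
proof -
  have "(c + of_nat n) * of_nat (Suc n) \<noteq> 0"
    using assms by (simp del: of_nat_Suc)
  moreover have "(of_nat n + 1) * (of_nat n + c) = (c + of_nat n) * (of_nat (Suc n) :: complex)"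
    by (simp add: algebra_simps)
  ultimately show ?thesis
    unfolding hyp2F1_coeff_Suc by (simp add: ac_simps)
qed

lemma one_le_conv_radius_hyp2F1_coeff: "1 \<le> conv_radius (hyp2F1_coeff a b c)"
proof (rule one_le_conv_radius_if_dominated)
  fix q :: real assume q: "1 < q"
  have "\<forall>\<^sub>F n in sequentially.
      (real n + norm a) * (real n + norm b) \<le> q * ((real n - norm c) * (real n + 1))"
    using q by real_asymp
  moreover have "\<forall>\<^sub>F n in sequentially. norm c < real n"
    by real_asymp
  ultimately have "\<forall>\<^sub>F n in sequentially.
      norm (hyp2F1_coeff a b c (Suc n)) \<le> q * Max (norm ` hyp2F1_coeff a b c ` {..<Suc n})"
  proof eventually_elim
    case (elim n)
    have Suc_n: "norm (of_nat (Suc n) :: complex) = real n + 1"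
      using norm_of_nat[of "Suc n", where 'a = complex] by simp
    have "norm (a + of_nat n) * norm (b + of_nat n) \<le> (real n + norm a) * (real n + norm b)"
      using norm_triangle_ineq[of a "of_nat n"] norm_triangle_ineq[of b "of_nat n"]
      by (intro mult_mono) auto
    also have "\<dots> \<le> q * ((real n - norm c) * (real n + 1))"
      by (rule elim(1))
    also have "\<dots> \<le> q * (norm (c + of_nat n) * (real n + 1))"
      using norm_triangle_ineq2[of "of_nat n" "- c"] elim(2) q
      by (intro mult_left_mono mult_right_mono) (auto simp: add.commute)
    finally have "norm (a + of_nat n) * norm (b + of_nat n) \<le> q * (norm (c + of_nat n) * (real n + 1))" .
    moreover have "real n - norm c \<le> norm (c + of_nat n)"
      using norm_triangle_ineq2[of "of_nat n" "- c"] by (simp add: add.commute)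
    then have "0 < norm (c + of_nat n)"
      using elim(2) by linarith
    then have "0 < norm (c + of_nat n) * (real n + 1)"
      by simp
    ultimately have ratio: "norm ((a + of_nat n) * (b + of_nat n) / ((c + of_nat n) * of_nat (Suc n))) \<le> q"
      unfolding norm_divide norm_mult Suc_n by (simp add: pos_divide_le_eq)
    have "norm (hyp2F1_coeff a b c (Suc n)) \<le> q * norm (hyp2F1_coeff a b c n)"
      unfolding hyp2F1_coeff_Suc norm_mult by (rule mult_right_mono[OF ratio norm_ge_zero])
    also have "\<dots> \<le> q * Max (norm ` hyp2F1_coeff a b c ` {..<Suc n})"
      using q by (intro mult_left_mono Max_ge) auto
    finally show ?case .
  qed
  then show "\<forall>\<^sub>F n in sequentially. norm (hyp2F1_coeff a b c n) \<le> q * Max (norm ` hyp2F1_coeff a b c ` {..<n})"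
    by (rule eventually_sequentially_Suc[THEN iffD1])
qed

lemma hyp2F1_coeff_ode:
  fixes a b c :: complex
  assumes c: "\<And>n. c + of_nat n \<noteq> 0"
  defines "h \<equiv> hyp2F1_coeff a b c"
  shows "shift_coeffs 1 (diffs (diffs h)) n - shift_coeffs 2 (diffs (diffs h)) n + c * diffs h n
      - (a + b + 1) * shift_coeffs 1 (diffs h) n - a * b * h n = 0"
proof -
  have "shift_coeffs 1 (diffs (diffs h)) n - shift_coeffs 2 (diffs (diffs h)) n + c * diffs h n
      - (a + b + 1) * shift_coeffs 1 (diffs h) n - a * b * h n
      = (of_nat n + 1) * (of_nat n + c) * h (Suc n) - (of_nat n + a) * (of_nat n + b) * h n"
  proof (cases "n < 2")
    case True
    then consider "n = 0" | "n = 1" by linarith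
    then show ?thesis
      by cases (simp_all add: shift_coeffs_def diffs_def algebra_simps)
  next
    case False
    then obtain m where "n = Suc (Suc m)"
      by (metis add_2_eq_Suc le_add_diff_inverse not_less)
    then show ?thesis
      by (simp add: shift_coeffs_def diffs_def algebra_simps)
  qed
  also have "\<dots> = 0"
    unfolding h_def using hyp2F1_coeff_recurrence[OF c] by simp
  finally show ?thesis .
qed

lemma hyp2F1_ode:
  fixes a b c w :: complex
  assumes c: "\<And>n. c + of_nat n \<noteq> 0" and w: "norm w < 1"
  defines "h \<equiv> hyp2F1_coeff a b c"
  shows "w * (1 - w) * pseries (diffs (diffs h)) w + (c - (a + b + 1) * w) * pseries (diffs h) w
           - a * b * pseries h w = 0"
proof -
  have radius: "ereal (norm w) < conv_radius h" "ereal (norm w) < conv_radius (diffs h)"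
      "ereal (norm w) < conv_radius (diffs (diffs h))"
    using w one_le_conv_radius_hyp2F1_coeff[of a b c] conv_radius_diffs_ge[of h]
      conv_radius_diffs_ge[of "diffs h"]
    by (auto simp: h_def intro: less_le_trans[of _ 1])
  have "(\<lambda>n. (shift_coeffs 1 (diffs (diffs h)) n - shift_coeffs 2 (diffs (diffs h)) n + c * diffs h n
        - (a + b + 1) * shift_coeffs 1 (diffs h) n - a * b * h n) * w ^ n)
      sums (w ^ 1 * pseries (diffs (diffs h)) w - w ^ 2 * pseries (diffs (diffs h)) w
        + c * pseries (diffs h) w - (a + b + 1) * (w ^ 1 * pseries (diffs h) w) - a * b * pseries h w)"
    unfolding ring_distribs mult.assoc
    by (intro sums_add sums_diff sums_mult sums_shift_coeffs pseries_sums radius)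
  then have "(\<lambda>n. 0) sums (w ^ 1 * pseries (diffs (diffs h)) w - w ^ 2 * pseries (diffs (diffs h)) w
        + c * pseries (diffs h) w - (a + b + 1) * (w ^ 1 * pseries (diffs h) w) - a * b * pseries h w)"
    unfolding h_def hyp2F1_coeff_ode[OF c] by simp
  then have "w ^ 1 * pseries (diffs (diffs h)) w - w ^ 2 * pseries (diffs (diffs h)) w
        + c * pseries (diffs h) w - (a + b + 1) * (w ^ 1 * pseries (diffs h) w) - a * b * pseries h w = 0"
    using sums_zero sums_unique2 by blast
  then show ?thesis
    by (simp add: algebra_simps power2_eq_square)
qed

text \<open>With \<open>\<tau> = tanh t\<close> and \<open>v = 1 - \<tau>\<^sup>2 = 1 / cosh\<^sup>2 t\<close>, the left-hand side is
  \<open>(\<Phi>\<^sub>0'' + (J'/J) \<Phi>\<^sub>0' - (lam\<^sup>2 - \<rho>\<^sup>2) \<Phi>\<^sub>0) / (2 cosh t)\<^sup>\<mu>\<close> for \<open>\<Phi>\<^sub>0 = (2 cosh t)\<^sup>\<mu> F(v)\<close>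
  and \<open>(p, q, u) = (m1p, m1m, m2p)\<close>. The right-hand side is \<open>4 v\<close> times the hypergeometric
  operator applied to \<open>F\<close> at \<open>v\<close>.\<close>

lemma hyp2F1_radial_identity:
  fixes \<tau> F F1 F2 lam p q u :: complex
  defines "\<rho> \<equiv> (p + q + 2 * u) / 2" and "v \<equiv> 1 - \<tau>\<^sup>2"
  defines "\<mu> \<equiv> lam - \<rho>" and "a \<equiv> (\<rho> - lam) / 2" and "b \<equiv> (- \<rho> - lam + 1 + p + u) / 2"
  shows "\<mu> * \<tau> * (\<tau> * (\<mu> * F - 2 * v * F1))
      + v * (\<mu> * F - 2 * \<mu> * \<tau>\<^sup>2 * F1 - 2 * (1 - 3 * \<tau>\<^sup>2) * F1 + 4 * \<tau>\<^sup>2 * v * F2)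
      + (p + q * \<tau>\<^sup>2 + u * (1 + \<tau>\<^sup>2)) * (\<mu> * F - 2 * v * F1) - (lam\<^sup>2 - \<rho>\<^sup>2) * F
    = 4 * v * (v * (1 - v) * F2 + ((1 - lam) - (a + b + 1) * v) * F1 - a * b * F)"
  unfolding \<rho>_def v_def \<mu>_def a_def b_def by (simp add: field_simps power2_eq_square)

definition reduced_domain :: "complex set" where
  "reduced_domain = {z. 0 < Re (1 + z\<^sup>2) \<and> norm (4 * z\<^sup>2 / (1 + z\<^sup>2)\<^sup>2) < 1}"

lemma in_reduced_domainI:
  assumes y: "(Im z)\<^sup>2 < 1" and xy: "6 * (Im z)\<^sup>2 < (1 - (Re z)\<^sup>2)\<^sup>2"
  shows "z \<in> reduced_domain"
proof -
  define x y where "x = Re z" and "y = Im z"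
  have "Re (1 + z\<^sup>2) = 1 + x\<^sup>2 - y\<^sup>2"
    by (simp add: x_def y_def power2_eq_square)
  then have re: "0 < Re (1 + z\<^sup>2)"
    using y zero_le_power2[of x] unfolding y_def by linarith
  have "(norm (1 + z\<^sup>2))\<^sup>2 - 4 * (norm z)\<^sup>2 = (1 - x\<^sup>2)\<^sup>2 - 6 * y\<^sup>2 + 2 * x\<^sup>2 * y\<^sup>2 + y\<^sup>2 * y\<^sup>2"
    unfolding cmod_power2 by (simp add: x_def y_def power2_eq_square algebra_simps)
  moreover have "0 \<le> 2 * x\<^sup>2 * y\<^sup>2 + y\<^sup>2 * y\<^sup>2"
    by simp
  moreover have "6 * y\<^sup>2 < (1 - x\<^sup>2)\<^sup>2"
    using xy by (simp add: x_def y_def)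
  ultimately have less: "4 * (norm z)\<^sup>2 < (norm (1 + z\<^sup>2))\<^sup>2"
    by linarith
  moreover have "0 < (norm (1 + z\<^sup>2))\<^sup>2"
    using less zero_le_power2[of "norm z"] by linarith
  ultimately have "norm (4 * z\<^sup>2 / (1 + z\<^sup>2)\<^sup>2) < 1"
    by (simp add: norm_divide norm_mult norm_power)
  with re show ?thesis
    by (simp add: reduced_domain_def)
qed

lemma ball_subset_reduced_domain: "ball 0 (1/3) \<subseteq> reduced_domain"
proof
  fix z :: complex assume "z \<in> ball 0 (1/3)"
  then have "(norm z)\<^sup>2 < (1/3)\<^sup>2"
    by (intro power_strict_mono) auto
  then have "(Re z)\<^sup>2 + (Im z)\<^sup>2 < 1/9"
    by (simp add: cmod_power2 power_divide)
  then have small: "(Re z)\<^sup>2 < 1/9" "(Im z)\<^sup>2 < 1/9"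
    using zero_le_power2[of "Re z"] zero_le_power2[of "Im z"] by linarith+
  then have "(8/9)\<^sup>2 < (1 - (Re z)\<^sup>2)\<^sup>2"
    by (intro power_strict_mono) auto
  then show "z \<in> reduced_domain"
    using small by (intro in_reduced_domainI) (simp_all add: power_divide)
qed

lemma strip_subset_reduced_domain:
  assumes x1: "0 < x1" "x1 < 1"
  defines "\<delta> \<equiv> (1 - x1\<^sup>2) / 3"
  shows "{z. 0 < Re z \<and> Re z < x1 \<and> \<bar>Im z\<bar> < \<delta>} \<subseteq> reduced_domain \<inter> ball 0 1"
proof
  fix z :: complex assume "z \<in> {z. 0 < Re z \<and> Re z < x1 \<and> \<bar>Im z\<bar> < \<delta>}"
  then have z: "0 < Re z" "Re z < x1" "\<bar>Im z\<bar> < \<delta>"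
    by auto
  have \<delta>: "0 < \<delta>" "\<delta> < 1/3" "3 * \<delta> = 1 - x1\<^sup>2"
    using x1 by (simp_all add: \<delta>_def power_less_one_iff)
  have x2: "(Re z)\<^sup>2 < x1\<^sup>2"
    using z by (intro power_strict_mono) auto
  have "(Im z)\<^sup>2 < \<delta>\<^sup>2"
    using z(3) by (metis abs_ge_zero power2_abs power_strict_mono zero_less_numeral)
  moreover have "\<delta>\<^sup>2 < \<delta>"
    using \<delta> by (simp add: power2_eq_square)
  ultimately have y2: "(Im z)\<^sup>2 < \<delta>"
    by linarith
  have "(3 * \<delta>)\<^sup>2 < (1 - (Re z)\<^sup>2)\<^sup>2"
    using \<delta> x2 by (intro power_strict_mono) auto
  moreover have "(3 * \<delta>)\<^sup>2 = 9 * \<delta>\<^sup>2"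
    by (simp add: power2_eq_square)
  then have "6 * (Im z)\<^sup>2 \<le> (3 * \<delta>)\<^sup>2"
    using \<open>(Im z)\<^sup>2 < \<delta>\<^sup>2\<close> zero_le_power2[of \<delta>] by linarith
  ultimately have "z \<in> reduced_domain"
    using y2 \<delta> by (intro in_reduced_domainI) auto
  moreover have "(norm z)\<^sup>2 < 1"
    using x2 y2 \<delta> by (simp add: cmod_power2)
  ultimately show "z \<in> reduced_domain \<inter> ball 0 1"
    by (simp add: power_less_one_iff)
qed

locale HC_expansion =
  fixes m1p m1m m2p :: nat and lam :: complex
  assumes lam_not_half_nat: "\<forall>n::nat. lam \<noteq> of_nat n / 2"
begin

definition \<rho> :: complex where "\<rho> = of_real (rho_mult m1p m1m m2p 0)"
definition \<mu> :: complex where "\<mu> = lam - \<rho>"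
definition \<kappa> :: complex where "\<kappa> = lam\<^sup>2 - \<rho>\<^sup>2"

definition hyp_a :: complex where "hyp_a = (\<rho> - lam) / 2"
definition hyp_b :: complex where "hyp_b = (- \<rho> - lam + 1 + of_nat m1p + of_nat m2p) / 2"
definition hcoeff :: "nat \<Rightarrow> complex" where "hcoeff = hyp2F1_coeff hyp_a hyp_b (1 - lam)"

definition F :: "complex \<Rightarrow> complex" where "F = pseries hcoeff"
definition F1 :: "complex \<Rightarrow> complex" where "F1 = pseries (diffs hcoeff)"
definition F2 :: "complex \<Rightarrow> complex" where "F2 = pseries (diffs (diffs hcoeff))"

lemma rho_eq: "\<rho> = (of_nat m1p + of_nat m1m + 2 * of_nat m2p) / 2"
  by (simp add: \<rho>_def rho_mult_def)

lemma one_minus_lam_add_of_nat_neq_0: "1 - lam + of_nat n \<noteq> 0"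
proof
  assume "1 - lam + of_nat n = 0"
  then have "lam = 1 + of_nat n"
    by (simp add: algebra_simps)
  also have "\<dots> = of_nat (2 * (n + 1)) / 2"
    by simp
  finally show False
    using lam_not_half_nat by blast
qed

lemma one_le_conv_radius_hcoeff:
  "1 \<le> conv_radius hcoeff" "1 \<le> conv_radius (diffs hcoeff)"
  using one_le_conv_radius_hyp2F1_coeff conv_radius_diffs_ge[of hcoeff]
  by (auto simp: hcoeff_def intro: order.trans)

lemma has_field_derivative_F: "norm z < 1 \<Longrightarrow> (F has_field_derivative F1 z) (at z)"
  unfolding F_def F1_def using one_le_conv_radius_hcoeff(1)
  by (intro has_field_derivative_pseries) (simp add: less_le_trans[of _ 1])

lemma has_field_derivative_F1: "norm z < 1 \<Longrightarrow> (F1 has_field_derivative F2 z) (at z)"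
  unfolding F1_def F2_def using one_le_conv_radius_hcoeff(2)
  by (intro has_field_derivative_pseries) (simp add: less_le_trans[of _ 1])

lemma hyp2F1_ode_F:
  "norm w < 1 \<Longrightarrow>
     w * (1 - w) * F2 w + ((1 - lam) - (hyp_a + hyp_b + 1) * w) * F1 w - hyp_a * hyp_b * F w = 0"
  unfolding F_def F1_def F2_def hcoeff_def
  by (rule hyp2F1_ode) (use one_minus_lam_add_of_nat_neq_0 in \<open>simp_all add: algebra_simps\<close>)

definition E :: "real \<Rightarrow> complex" where "E s = exp (\<mu> * of_real (ln (2 * cosh s)))"

lemma has_vector_derivative_E_comp_tanh:
  assumes "(g has_field_derivative g') (at (of_real (tanh s)))"
  shows "((\<lambda>s. E s * g (of_real (tanh s))) has_vector_derivative
           E s * (\<mu> * of_real (tanh s) * g (of_real (tanh s)) + (1 - (of_real (tanh s))\<^sup>2) * g')) (at s)"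
proof -
  have "((\<lambda>z. exp (\<mu> * z)) has_field_derivative \<mu> * E s) (at (of_real (ln (2 * cosh s))))"
    by (auto intro!: derivative_eq_intros simp: E_def)
  then have dE: "(E has_vector_derivative of_real (tanh s) * (\<mu> * E s)) (at s)"
    unfolding E_def [abs_def]
    by (rule has_vector_derivative_comp_of_real[where u = "\<lambda>s. ln (2 * cosh s)" and G = "\<lambda>z. exp (\<mu> * z)",
          rotated])
      (auto intro!: derivative_eq_intros simp: tanh_def cosh_real_pos[THEN less_imp_neq, symmetric])
  have "(tanh has_real_derivative 1 - (tanh s)\<^sup>2) (at s)"
    using has_field_derivative_tanh[of "\<lambda>x. x" s 1] by simp
  then have dg: "((\<lambda>s. g (of_real (tanh s))) has_vector_derivative of_real (1 - (tanh s)\<^sup>2) * g') (at s)"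
    by (rule has_vector_derivative_comp_of_real[where u = tanh, OF _ assms])
  show ?thesis
    using has_vector_derivative_mult[OF dE dg] by (simp add: algebra_simps)
qed

text \<open>\<open>\<Phi>\<^sub>0 = E \<cdot> g0 \<circ> tanh\<close> and \<open>\<Phi>\<^sub>0' = E \<cdot> g1 \<circ> tanh\<close>, because \<open>E' = \<mu> tanh \<cdot> E\<close> and
  \<open>tanh' = 1 - tanh\<^sup>2\<close>.\<close>

definition g0 :: "complex \<Rightarrow> complex" where "g0 \<tau> = F (1 - \<tau>\<^sup>2)"

definition g1 :: "complex \<Rightarrow> complex" where
  "g1 \<tau> = \<tau> * (\<mu> * F (1 - \<tau>\<^sup>2) - 2 * (1 - \<tau>\<^sup>2) * F1 (1 - \<tau>\<^sup>2))"

definition g1' :: "complex \<Rightarrow> complex" where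
  "g1' \<tau> = \<mu> * F (1 - \<tau>\<^sup>2) - 2 * \<mu> * \<tau>\<^sup>2 * F1 (1 - \<tau>\<^sup>2) - 2 * (1 - 3 * \<tau>\<^sup>2) * F1 (1 - \<tau>\<^sup>2)
     + 4 * \<tau>\<^sup>2 * (1 - \<tau>\<^sup>2) * F2 (1 - \<tau>\<^sup>2)"

lemma has_field_derivative_g0:
  "norm (1 - \<tau>\<^sup>2) < 1 \<Longrightarrow> (g0 has_field_derivative - 2 * \<tau> * F1 (1 - \<tau>\<^sup>2)) (at \<tau>)"
  unfolding g0_def [abs_def]
  by (rule DERIV_cong[OF DERIV_chain2[OF has_field_derivative_F]]) (auto intro!: derivative_eq_intros)

lemma has_field_derivative_g1:
  "norm (1 - \<tau>\<^sup>2) < 1 \<Longrightarrow> (g1 has_field_derivative g1' \<tau>) (at \<tau>)"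
  unfolding g1_def [abs_def]
  by (rule DERIV_cong)
    (auto intro!: derivative_eq_intros DERIV_chain2[OF has_field_derivative_F]
      DERIV_chain2[OF has_field_derivative_F1] simp: g1'_def algebra_simps power2_eq_square)

lemma norm_one_minus_tanh_square: "0 < s \<Longrightarrow> norm (1 - (of_real (tanh s))\<^sup>2 :: complex) < 1"
proof -
  assume "0 < s"
  then have "1 < cosh s"
    using cosh_real_strict_mono[of 0 s] by simp
  then have "0 < 1 / (cosh s)\<^sup>2" "1 / (cosh s)\<^sup>2 < 1"
    by (simp_all add: power_less_one_iff one_less_power)
  then show ?thesis
    unfolding inverse_cosh_square by (metis norm_of_real of_real_1 of_real_diff of_real_power abs_of_pos)
qed

definition phi0 :: "real \<Rightarrow> complex" where "phi0 s = E s * g0 (of_real (tanh s))"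
definition dphi0 :: "real \<Rightarrow> complex" where "dphi0 s = E s * g1 (of_real (tanh s))"
definition ddphi0 :: "real \<Rightarrow> complex" where
  "ddphi0 s = E s * (\<mu> * of_real (tanh s) * g1 (of_real (tanh s))
                     + (1 - (of_real (tanh s))\<^sup>2) * g1' (of_real (tanh s)))"

lemma Phi0_eq_phi0: "Phi0 m1p m1m m2p 0 lam s = phi0 s"
proof -
  have pos: "0 < 2 * cosh s"
    by (simp add: cosh_real_pos)
  then have "complex_of_real (2 * cosh s) powr (lam - \<rho>) = E s"
    by (simp add: powr_def E_def \<mu>_def Ln_of_real [symmetric] mult.commute)
  moreover have "complex_of_real (1 / (cosh s)\<^sup>2) = 1 - (of_real (tanh s))\<^sup>2"
    unfolding inverse_cosh_square by simp
  ultimately show ?thesis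
    by (simp add: Phi0_def Let_def phi0_def g0_def F_def hcoeff_def hyp_a_def hyp_b_def hyp2F1_eq_pseries
        \<rho>_def [symmetric])
qed

lemma has_vector_derivative_phi0: "0 < s \<Longrightarrow> (phi0 has_vector_derivative dphi0 s) (at s)"
  unfolding phi0_def [abs_def]
  by (rule has_vector_derivative_eq_rhs,
      rule has_vector_derivative_E_comp_tanh[OF has_field_derivative_g0[OF norm_one_minus_tanh_square]])
    (simp_all add: dphi0_def g1_def g0_def algebra_simps)

lemma has_vector_derivative_dphi0: "0 < s \<Longrightarrow> (dphi0 has_vector_derivative ddphi0 s) (at s)"
  unfolding dphi0_def [abs_def] ddphi0_def
  by (rule has_vector_derivative_E_comp_tanh[OF has_field_derivative_g1[OF norm_one_minus_tanh_square]])

lemma phi0_radial_ode: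
  assumes "0 < s"
  shows "ddphi0 s + of_real (Jfun_logderiv m1p m1m m2p 0 s) * dphi0 s = \<kappa> * phi0 s"
proof -
  define T where "T = (of_real (tanh s) :: complex)"
  define v where "v = 1 - T\<^sup>2"
  have "T \<noteq> 0"
    using assms by (simp add: T_def tanh_def)
  have R: "of_real (Jfun_logderiv m1p m1m m2p 0 s) =
      (of_nat m1p + of_nat m1m * T\<^sup>2 + of_nat m2p * (1 + T\<^sup>2)) / T"
    using Jfun_logderiv_tanh[OF assms, of m1p m1m m2p] by (simp add: T_def)
  have "ddphi0 s + of_real (Jfun_logderiv m1p m1m m2p 0 s) * dphi0 s - \<kappa> * phi0 s
      = E s * (\<mu> * T * (T * (\<mu> * F v - 2 * v * F1 v))
          + v * (\<mu> * F v - 2 * \<mu> * T\<^sup>2 * F1 v - 2 * (1 - 3 * T\<^sup>2) * F1 v + 4 * T\<^sup>2 * v * F2 v)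
          + (of_nat m1p + of_nat m1m * T\<^sup>2 + of_nat m2p * (1 + T\<^sup>2)) * (\<mu> * F v - 2 * v * F1 v)
          - (lam\<^sup>2 - \<rho>\<^sup>2) * F v)"
    using \<open>T \<noteq> 0\<close> unfolding ddphi0_def dphi0_def phi0_def R
    by (simp add: g0_def g1_def g1'_def \<kappa>_def T_def [symmetric] v_def [symmetric] field_simps)
  also have "\<dots> = E s * (4 * v * (v * (1 - v) * F2 v + ((1 - lam) - (hyp_a + hyp_b + 1) * v) * F1 v
      - hyp_a * hyp_b * F v))"
    unfolding \<mu>_def hyp_a_def hyp_b_def rho_eq v_def by (subst hyp2F1_radial_identity) simp
  also have "\<dots> = 0"
    using hyp2F1_ode_F[OF norm_one_minus_tanh_square[OF assms]] by (simp add: v_def T_def)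
  finally show ?thesis
    by simp
qed

definition Phi0_reduced :: "complex \<Rightarrow> complex" where
  "Phi0_reduced z = exp (\<mu> * Ln (1 + z\<^sup>2)) * F (4 * z\<^sup>2 / (1 + z\<^sup>2)\<^sup>2)"

lemma holomorphic_on_Phi0_reduced: "Phi0_reduced holomorphic_on reduced_domain"
proof -
  have Re: "0 < Re (1 + z\<^sup>2)" and small: "norm (4 * z\<^sup>2 / (1 + z\<^sup>2)\<^sup>2) < 1"
    if "z \<in> reduced_domain" for z
    using that by (simp_all add: reduced_domain_def)
  have "Re (1 + z\<^sup>2) \<noteq> Re 0" if "z \<in> reduced_domain" for z
    using Re[OF that] by simp
  then have nz: "1 + z\<^sup>2 \<noteq> 0" if "z \<in> reduced_domain" for z
    using that by metis
  have "1 + z\<^sup>2 \<notin> \<real>\<^sub>\<le>\<^sub>0" if "z \<in> reduced_domain" for z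
    using Re[OF that] by (auto simp: complex_nonpos_Reals_iff)
  then have power: "(\<lambda>z. exp (\<mu> * Ln (1 + z\<^sup>2))) holomorphic_on reduced_domain"
    by (intro holomorphic_intros) auto
  have "(\<lambda>z. 4 * z\<^sup>2 / (1 + z\<^sup>2)\<^sup>2) holomorphic_on reduced_domain"
    using nz by (intro holomorphic_intros) auto
  moreover have "F holomorphic_on ball 0 1"
    unfolding F_def using one_le_conv_radius_hcoeff(1)
    by (intro holomorphic_on_pseries) (auto simp: less_le_trans[of _ 1])
  ultimately have "(F \<circ> (\<lambda>z. 4 * z\<^sup>2 / (1 + z\<^sup>2)\<^sup>2)) holomorphic_on reduced_domain"
    using small by (auto intro!: holomorphic_on_compose_gen)
  with power show ?thesis
    unfolding Phi0_reduced_def [abs_def] o_def by (rule holomorphic_on_mult)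
qed

lemma phi0_eq_Phi0_reduced: "phi0 t = exp (\<mu> * of_real t) * Phi0_reduced (of_real (exp (- t)))"
proof -
  define x where "x = exp (- t)"
  have x: "0 < x" "exp t = 1 / x"
    by (simp_all add: x_def exp_minus field_simps)
  have pos: "0 < 1 + x\<^sup>2"
    by (simp add: add_pos_nonneg)
  have cosh: "cosh t = (1 + x\<^sup>2) / (2 * x)"
    unfolding cosh_field_def x(2) using x(1) by (simp add: x_def [symmetric] field_simps power2_eq_square)
  have "2 * cosh t = exp t * (1 + x\<^sup>2)"
    unfolding cosh x(2) using x(1) by (simp add: field_simps)
  then have "ln (2 * cosh t) = t + ln (1 + x\<^sup>2)"
    using pos by (simp add: ln_mult)
  then have "E t = exp (\<mu> * of_real t) * exp (\<mu> * Ln (1 + (of_real x)\<^sup>2))"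
    using pos by (simp add: E_def Ln_of_real [symmetric] distrib_left exp_add)
  moreover have "1 - (of_real (tanh t))\<^sup>2 = 4 * (of_real x)\<^sup>2 / (1 + (of_real x)\<^sup>2 :: complex)\<^sup>2"
  proof -
    have "1 - (tanh t)\<^sup>2 = 4 * x\<^sup>2 / (1 + x\<^sup>2)\<^sup>2"
      unfolding inverse_cosh_square [symmetric] cosh using x(1) pos by (simp add: field_simps power2_eq_square)
    then have "complex_of_real (1 - (tanh t)\<^sup>2) = complex_of_real (4 * x\<^sup>2 / (1 + x\<^sup>2)\<^sup>2)"
      by (rule arg_cong)
    then show ?thesis
      by simp
  qed
  ultimately show ?thesis
    by (simp add: phi0_def g0_def Phi0_reduced_def x_def)
qed

definition Gamma_Phi0 :: "nat \<Rightarrow> complex" where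
  "Gamma_Phi0 n = (deriv ^^ n) Phi0_reduced 0 / fact n"

lemma Gamma_Phi0_sums: "norm w < 1/3 \<Longrightarrow> (\<lambda>n. Gamma_Phi0 n * w ^ n) sums Phi0_reduced w"
  unfolding Gamma_Phi0_def
  using holomorphic_power_series[OF holomorphic_on_subset[OF holomorphic_on_Phi0_reduced
      ball_subset_reduced_domain]]
  by simp

lemma Gamma_Phi0_0: "Gamma_Phi0 0 = 1"
  by (simp add: Gamma_Phi0_def Phi0_reduced_def F_def pseries_def hcoeff_def)

lemma conv_radius_Gamma_Phi0_ge: "ereal (1/3) \<le> conv_radius Gamma_Phi0"
  by (rule conv_radius_geI_ex') (use Gamma_Phi0_sums sums_summable in force)

lemma exp_pseries_radial_ode_if_eq_phi0:
  assumes U: "open U" "U \<subseteq> {0<..}" and radius: "\<And>s. s \<in> U \<Longrightarrow> ereal (exp (- s)) < conv_radius \<Gamma>"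
    and eq: "\<And>s. s \<in> U \<Longrightarrow> exp_pseries \<mu> \<Gamma> s = phi0 s" and t: "t \<in> U"
  shows "exp_pseries \<mu> (euler_coeffs \<mu> (euler_coeffs \<mu> \<Gamma>)) t
           + of_real (Jfun_logderiv m1p m1m m2p 0 t) * exp_pseries \<mu> (euler_coeffs \<mu> \<Gamma>) t
         = \<kappa> * exp_pseries \<mu> \<Gamma> t"
proof -
  have pos: "0 < s" if "s \<in> U" for s
    using U(2) that by auto
  have eq1: "exp_pseries \<mu> (euler_coeffs \<mu> \<Gamma>) s = dphi0 s" if "s \<in> U" for s
    by (rule has_vector_derivative_eq_on_open[OF U(1) that eq has_vector_derivative_exp_pseries
          has_vector_derivative_phi0]) (use that radius pos in auto)
  have "ereal (exp (- t)) < conv_radius (euler_coeffs \<mu> \<Gamma>)"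
    using radius[OF t] conv_radius_euler_coeffs_ge by (rule less_le_trans)
  then have eq2: "exp_pseries \<mu> (euler_coeffs \<mu> (euler_coeffs \<mu> \<Gamma>)) t = ddphi0 t"
    using has_vector_derivative_eq_on_open[OF U(1) t eq1 has_vector_derivative_exp_pseries
        has_vector_derivative_dphi0[OF pos[OF t]]]
    by blast
  show ?thesis
    unfolding eq2 eq1[OF t] eq[OF t] by (rule phi0_radial_ode[OF pos[OF t]])
qed

lemma radial_recurrence_lead_eq:
  "radial_recurrence_lead \<mu> \<kappa> (of_nat (m1p + m1m + 2 * m2p)) n = of_nat n * (of_nat n - 2 * lam)"
  by (simp add: radial_recurrence_lead_def \<mu>_def \<kappa>_def rho_eq field_simps power2_eq_square)

lemma radial_recurrence_lead_neq_0:
  "0 < n \<Longrightarrow> radial_recurrence_lead \<mu> \<kappa> (of_nat (m1p + m1m + 2 * m2p)) n \<noteq> 0"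
  unfolding radial_recurrence_lead_eq using lam_not_half_nat[rule_format, of n]
  by (auto simp: field_simps)

lemma radial_recurrence_Gamma_Phi0:
  "radial_recurrence \<mu> \<kappa> (of_nat (m1p + m1m + 2 * m2p)) (2 * (of_nat m1p - of_nat m1m)) Gamma_Phi0 n = 0"
proof (rule radial_recurrence_if_ode[OF _ _ conv_radius_Gamma_Phi0_ge])
  fix t :: real assume t: "exp (- t) < 1/3"
  let ?U = "{ln 3 <..} :: real set"
  have U: "exp (- s) < 1/3" if "s \<in> ?U" for s
    using that exp_less_cancel_iff[of "- s" "- ln 3"] by (simp add: exp_minus)
  have "t \<in> ?U"
    using t exp_less_cancel_iff[of "- t" "- ln 3"] by (simp add: exp_minus)
  moreover have "ereal (exp (- s)) < conv_radius Gamma_Phi0" if "s \<in> ?U" for s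
    using U[OF that] conv_radius_Gamma_Phi0_ge by (simp add: less_le_trans[of _ "ereal (1/3)"])
  moreover have "exp_pseries \<mu> Gamma_Phi0 s = phi0 s" if "s \<in> ?U" for s
    using Gamma_Phi0_sums[of "of_real (exp (- s))"] U[OF that]
    by (simp add: exp_pseries_def phi0_eq_Phi0_reduced pseries_def sums_iff)
  moreover have "?U \<subseteq> {0<..}"
    using ln_gt_zero[of 3] by auto
  ultimately show "exp_pseries \<mu> (euler_coeffs \<mu> (euler_coeffs \<mu> Gamma_Phi0)) t
      + of_real (Jfun_logderiv m1p m1m m2p 0 t) * exp_pseries \<mu> (euler_coeffs \<mu> Gamma_Phi0) t
      = \<kappa> * exp_pseries \<mu> Gamma_Phi0 t"
    by (intro exp_pseries_radial_ode_if_eq_phi0[of ?U]) auto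
qed auto

lemma one_le_conv_radius_Gamma_Phi0: "1 \<le> conv_radius Gamma_Phi0"
  by (rule one_le_conv_radius_if_radial_recurrence[OF radial_recurrence_Gamma_Phi0])

lemma Phi0_reduced_eq_pseries:
  assumes x0: "0 < x0" "x0 < 1"
  shows "Phi0_reduced (of_real x0) = pseries Gamma_Phi0 (of_real x0)"
proof -
  define x1 where "x1 = (1 + x0) / 2"
  define \<delta> where "\<delta> = (1 - x1\<^sup>2) / 3"
  have x1: "0 < x1" "x1 < 1" "x0 < x1"
    using x0 by (auto simp: x1_def)
  define R where "R = {z. 0 < Re z} \<inter> {z. Re z < x1} \<inter> {z. Im z < \<delta>} \<inter> {z. - \<delta> < Im z}"
  have R: "R = {z. 0 < Re z \<and> Re z < x1 \<and> \<bar>Im z\<bar> < \<delta>}"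
    by (auto simp: R_def abs_less_iff)
  have R_sub: "R \<subseteq> reduced_domain \<inter> ball 0 1"
    unfolding R \<delta>_def by (rule strip_subset_reduced_domain[OF x1(1,2)])
  have "open R"
    unfolding R_def
    by (intro open_Int open_halfspace_Re_gt open_halfspace_Re_lt open_halfspace_Im_lt open_halfspace_Im_gt)
  have "connected R"
    unfolding R_def
    by (intro convex_connected convex_Int convex_halfspace_Re_gt convex_halfspace_Re_lt
        convex_halfspace_Im_lt convex_halfspace_Im_gt)
  have holo: "Phi0_reduced holomorphic_on R" "pseries Gamma_Phi0 holomorphic_on R"
    using R_sub holomorphic_on_subset[OF holomorphic_on_Phi0_reduced] one_le_conv_radius_Gamma_Phi0
    by (auto intro!: holomorphic_on_pseries simp: less_le_trans[of _ 1])
  have eq: "Phi0_reduced z = pseries Gamma_Phi0 z" if "z \<in> R \<inter> ball 0 (1/3)" for z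
    using Gamma_Phi0_sums[of z] that by (simp add: pseries_def sums_iff)
  have "0 < \<delta>"
    using x1 by (simp add: \<delta>_def power_less_one_iff)
  then have "of_real (min x0 (1/3) / 2) \<in> R \<inter> ball 0 (1/3)" "of_real x0 \<in> R"
    using x0 x1 by (auto simp: R)
  then show ?thesis
    using analytic_continuation_open[of "R \<inter> ball 0 (1/3)" R, OF _ \<open>open R\<close> _ \<open>connected R\<close> _ holo eq]
      \<open>open R\<close> by blast
qed

lemma exp_pseries_Gamma_Phi0: "0 < t \<Longrightarrow> exp_pseries \<mu> Gamma_Phi0 t = phi0 t"
  by (simp add: exp_pseries_def phi0_eq_Phi0_reduced Phi0_reduced_eq_pseries)

lemma HC_series_solution_Gamma_Phi0: "HC_series_solution m1p m1m m2p 0 lam Gamma_Phi0"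
  unfolding HC_series_solution_iff \<rho>_def [symmetric] \<mu>_def [symmetric] \<kappa>_def [symmetric]
proof (intro conjI allI impI Gamma_Phi0_0 one_le_conv_radius_Gamma_Phi0)
  fix t :: real assume "0 < t"
  then show "exp_pseries \<mu> (euler_coeffs \<mu> (euler_coeffs \<mu> Gamma_Phi0)) t
      + of_real (Jfun_logderiv m1p m1m m2p 0 t) * exp_pseries \<mu> (euler_coeffs \<mu> Gamma_Phi0) t
      = \<kappa> * exp_pseries \<mu> Gamma_Phi0 t"
    using one_le_conv_radius_Gamma_Phi0 exp_pseries_Gamma_Phi0
    by (intro exp_pseries_radial_ode_if_eq_phi0[of "{0<..}"]) (auto simp: less_le_trans[of _ 1])
qed

lemma HC_series_solution_unique:
  assumes "HC_series_solution m1p m1m m2p 0 lam \<Gamma>"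
  shows "\<Gamma> = Gamma_Phi0"
proof
  fix n
  have sol: "\<Gamma> 0 = 1" "1 \<le> conv_radius \<Gamma>"
    "\<And>t. 0 < t \<Longrightarrow> exp_pseries \<mu> (euler_coeffs \<mu> (euler_coeffs \<mu> \<Gamma>)) t
      + of_real (Jfun_logderiv m1p m1m m2p 0 t) * exp_pseries \<mu> (euler_coeffs \<mu> \<Gamma>) t
      = \<kappa> * exp_pseries \<mu> \<Gamma> t"
    using assms unfolding HC_series_solution_iff \<rho>_def [symmetric] \<mu>_def [symmetric] \<kappa>_def [symmetric]
    by auto
  have "radial_recurrence \<mu> \<kappa> (of_nat (m1p + m1m + 2 * m2p)) (2 * (of_nat m1p - of_nat m1m)) \<Gamma> n = 0" for n
  proof (rule radial_recurrence_if_ode[of 1])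
    show "ereal 1 \<le> conv_radius \<Gamma>"
      using sol(2) by (simp add: one_ereal_def)
    show "exp_pseries \<mu> (euler_coeffs \<mu> (euler_coeffs \<mu> \<Gamma>)) t
        + of_real (Jfun_logderiv m1p m1m m2p 0 t) * exp_pseries \<mu> (euler_coeffs \<mu> \<Gamma>) t
        = \<kappa> * exp_pseries \<mu> \<Gamma> t" if "exp (- t) < 1" for t
      using that by (intro sol(3)) simp
  qed simp_all
  then show "\<Gamma> n = Gamma_Phi0 n"
    by (rule radial_recurrence_unique[OF _ radial_recurrence_Gamma_Phi0 _ radial_recurrence_lead_neq_0])
      (simp_all add: sol(1) Gamma_Phi0_0)
qed

lemma HC_Phi_eq: "HC_Phi m1p m1m m2p 0 lam = exp_pseries \<mu> Gamma_Phi0"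
  unfolding HC_Phi_def HC_sum_eq_exp_pseries \<rho>_def [symmetric] \<mu>_def [symmetric]
  using HC_series_solution_Gamma_Phi0 HC_series_solution_unique by blast

end

theorem proposition2p5:
  fixes m1p m1m m2p m2m :: nat and lam :: complex and t :: real
  assumes "m2m = 0"
    and "t > 0"
    and "\<forall>n::nat. lam \<noteq> of_nat n / 2"
  shows "Phi0 m1p m1m m2p m2m lam t = HC_Phi m1p m1m m2p m2m lam t"
proof -
  interpret HC_expansion m1p m1m m2p lam
    using assms(3) by unfold_locales
  show ?thesis
    unfolding assms(1) Phi0_eq_phi0 HC_Phi_eq exp_pseries_Gamma_Phi0[OF assms(2)] ..
qed

end
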